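(* Let $\mathbf{u}$ be an $m$-dimensional unit vector with entries in $\mathcal{R}_{12}$ with $\mathrm{lde}(\mathbf{u})\geq 1$. Then there exists a sequence $G_1,\ldots,G_q$ of one-level operators of type $\zeta_{12}$ and two-level operators of type $X$ and $H'$ such that $\mathrm{lde}(G_1\cdots G_q\mathbf{u})<\mathrm{lde}(\mathbf{u})$.
   Context: $\zeta_{12}=e^{2\pi i/12}$, $\mathcal{R}_{12}$ is the smallest subring of $\mathbb{C}$ containing $1/2$ and $\zeta_{12}$, and $\mathbb{Z}[\zeta_{12}]$ the smallest subring containing $\zeta_{12}$. Let $\delta=1+i$. For a vector $\mathbf{u}$ over $\mathcal{R}_{12}$, $\mathrm{lde}(\mathbf{u})$ is the smallest $\ell\in\mathbb{N}$ such that $\delta^\ell\mathbf{u}$ has all entries in $\mathbb{Z}[\zeta_{12}]$. $X=\begin{bmatrix}0&1\\1&0\end{bmatrix}$, $H'=\frac{1+i}{2}\begin{bmatrix}1&1\\1&-1\end{bmatrix}$. The one-level operator $c_{[j]}$ of type $c$ is the $m\times m$ identity with $(j,j)$ entry replaced by $c$; the two-level operator $M_{[j,j']}$ ($j<j'$) of type $M\in\mathrm{M}_2(\mathbb{C})$ is the $m\times m$ identity with entries at $(j,j),(j,j'),(j',j),(j',j')$ replaced by $M_{1,1},M_{1,2},M_{2,1},M_{2,2}$. *)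

theory Defs
  imports Complex_Main "Jordan_Normal_Form.Matrix"
begin

definition zeta12 :: complex where
  "zeta12 = exp (2 * pi * \<i> / 12)"

inductive_set Zzeta12 :: "complex set" where
  one: "1 \<in> Zzeta12"
| gen: "zeta12 \<in> Zzeta12"
| add: "x \<in> Zzeta12 \<Longrightarrow> y \<in> Zzeta12 \<Longrightarrow> x + y \<in> Zzeta12"
| neg: "x \<in> Zzeta12 \<Longrightarrow> - x \<in> Zzeta12"
| mult: "x \<in> Zzeta12 \<Longrightarrow> y \<in> Zzeta12 \<Longrightarrow> x * y \<in> Zzeta12"

inductive_set R12 :: "complex set" where
  one: "1 \<in> R12"
| half: "1/2 \<in> R12"
| gen: "zeta12 \<in> R12"
| add: "x \<in> R12 \<Longrightarrow> y \<in> R12 \<Longrightarrow> x + y \<in> R12"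
| neg: "x \<in> R12 \<Longrightarrow> - x \<in> R12"
| mult: "x \<in> R12 \<Longrightarrow> y \<in> R12 \<Longrightarrow> x * y \<in> R12"

definition delta :: complex where
  "delta = 1 + \<i>"

definition lde :: "complex vec \<Rightarrow> nat" where
  "lde u = (LEAST l. \<forall>i < dim_vec u. delta ^ l * u $ i \<in> Zzeta12)"

definition is_unit_vector :: "complex vec \<Rightarrow> bool" where
  "is_unit_vector u \<longleftrightarrow> (\<Sum>i<dim_vec u. (cmod (u $ i))\<^sup>2) = 1"

definition Xmat :: "complex mat" where
  "Xmat = mat_of_rows_list 2 [[0, 1], [1, 0]]"

definition Hprime :: "complex mat" where
  "Hprime = ((1 + \<i>) / 2) \<cdot>\<^sub>m mat_of_rows_list 2 [[1, 1], [1, -1]]"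

text \<open>one-level operator c_[j] (0-based indices j < m)\<close>
definition one_level :: "nat \<Rightarrow> complex \<Rightarrow> nat \<Rightarrow> complex mat" where
  "one_level m c j = mat m m (\<lambda>(a, b). if a = b then (if a = j then c else 1) else 0)"

text \<open>two-level operator M_[j,j'] (0-based indices, j < j' < m)\<close>
definition two_level :: "nat \<Rightarrow> complex mat \<Rightarrow> nat \<Rightarrow> nat \<Rightarrow> complex mat" where
  "two_level m M j j' = mat m m (\<lambda>(a, b).
     if a = j \<and> b = j then M $$ (0, 0)
     else if a = j \<and> b = j' then M $$ (0, 1)
     else if a = j' \<and> b = j then M $$ (1, 0)
     else if a = j' \<and> b = j' then M $$ (1, 1)
     else if a = b then 1 else 0)"

definition allowed_op :: "nat \<Rightarrow> complex mat \<Rightarrow> bool" where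
  "allowed_op m G \<longleftrightarrow>
     (\<exists>j < m. G = one_level m zeta12 j) \<or>
     (\<exists>j j'. j < j' \<and> j' < m \<and> (G = two_level m Xmat j j' \<or> G = two_level m Hprime j j'))"

end

theory Submission
  imports Defs "HOL-Computational_Algebra.Primes"
begin

text \<open>
  Put \<open>v = \<delta>\<^sup>k u\<close> with \<open>k = lde u\<close>; then \<open>v\<close> has entries in \<open>\<int>[\<zeta>]\<close> and
  \<open>\<Sum> |v\<^sub>i|\<^sup>2 = 2\<^sup>k \<equiv> 0 (mod 2)\<close>. Modulo 2 every element of \<open>\<int>[\<zeta>]\<close> is either divisible by \<open>\<delta>\<close>
  or congruent to \<open>\<zeta>\<^sup>r\<close> or to \<open>\<zeta>\<^sup>r (\<zeta> - 1)\<close>, with squared modulus congruent to \<open>0\<close>, \<open>1\<close> and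
  \<open>2 - \<surd>3\<close> respectively; as \<open>1\<close> and \<open>\<surd>3\<close> are independent, entries of each of the last two
  kinds come in even number. Two entries \<open>x, y\<close> of the same kind are made congruent mod 2 by
  a power of the one-level operator \<open>\<zeta>\<close>, after which \<open>H' = \<delta>/2 [[1,1],[1,-1]]\<close> turns them
  into \<open>\<delta> (x + y)/2\<close> and \<open>\<delta> (x - y)/2\<close>, both multiples of \<open>\<delta>\<close>. Once every entry is a multiple
  of \<open>\<delta>\<close>, the exponent \<open>k - 1\<close> already clears all denominators.
\<close>

section \<open>The ring \<open>\<int>[\<zeta>\<^sub>1\<^sub>2]\<close> in coordinates\<close>

lemma zeta12_eq: "zeta12 = Complex (sqrt 3 / 2) (1 / 2)"
proof -
  have "2 * pi * \<i> / 12 = \<i> * complex_of_real (pi / 6)"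
    by (simp add: field_simps)
  then show ?thesis
    unfolding zeta12_def by (simp add: exp_eq_polar cos_30 sin_30 Complex_eq cis.ctr)
qed

lemma zeta12_cube: "zeta12 ^ 3 = \<i>"
  by (simp add: zeta12_eq complex_eq_iff power3_eq_cube algebra_simps)

lemma zeta12_pow_4: "zeta12 ^ 4 = zeta12 ^ 2 - 1"
  by (simp add: zeta12_eq complex_eq_iff power4_eq_xxxx power2_eq_square algebra_simps)

lemma zeta12_pow_12: "zeta12 ^ 12 = 1"
  using power_mult[of zeta12 3 4] by (simp add: zeta12_cube)

lemma zeta12_pow_6: "zeta12 ^ 6 = -1"
  using power_mult[of zeta12 3 2] by (simp add: zeta12_cube)

lemma zeta12_mult_cnj: "zeta12 * cnj zeta12 = 1"
  by (simp add: zeta12_eq complex_eq_iff power2_eq_square)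

lemma int_plus_int_sqrt3_eq_0_iff:
  fixes p q :: int
  shows "of_int p + of_int q * sqrt 3 = 0 \<longleftrightarrow> p = 0 \<and> q = 0"
proof (intro iffI conjI)
  assume eq: "of_int p + of_int q * sqrt 3 = 0"
  show "q = 0"
  proof (rule ccontr)
    assume "q \<noteq> 0"
    have "real_of_int (p^2) = real_of_int (3 * q^2)"
      using arg_cong[OF eq[unfolded add_eq_0_iff], of "\<lambda>x. x^2"] by (simp add: power_mult_distrib)
    then have sq: "p^2 = 3 * q^2"
      by linarith
    then have "p \<noteq> 0"
      using \<open>q \<noteq> 0\<close> by auto
    have "multiplicity 3 (p^2) = 2 * multiplicity 3 p"
      using \<open>p \<noteq> 0\<close> by (simp add: prime_elem_multiplicity_power_distrib)
    moreover have "multiplicity 3 (3 * q^2) = Suc (2 * multiplicity 3 q)"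
      using \<open>q \<noteq> 0\<close> by (simp add: prime_elem_multiplicity_mult_distrib prime_elem_multiplicity_power_distrib)
    ultimately show False
      using sq Suc_double_not_eq_double by metis
  qed
  with eq show "p = 0"
    by simp
qed simp_all

lemma Zzeta12_0: "0 \<in> Zzeta12"
  using Zzeta12.add[OF Zzeta12.one Zzeta12.neg[OF Zzeta12.one]] by simp

lemma Zzeta12_diff: "x \<in> Zzeta12 \<Longrightarrow> y \<in> Zzeta12 \<Longrightarrow> x - y \<in> Zzeta12"
  using Zzeta12.add[OF _ Zzeta12.neg] by simp

lemma Zzeta12_power: "x \<in> Zzeta12 \<Longrightarrow> x ^ n \<in> Zzeta12"
  by (induction n) (simp_all add: Zzeta12.one Zzeta12.mult)

lemma Zzeta12_of_int: "of_int n \<in> Zzeta12"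
proof -
  have "of_nat k \<in> Zzeta12" for k
    by (induction k) (simp_all add: Zzeta12_0 Zzeta12.add Zzeta12.one)
  then show ?thesis
    by (cases n rule: int_cases2) (simp_all add: Zzeta12.neg)
qed

definition zeta_comb :: "int \<Rightarrow> int \<Rightarrow> int \<Rightarrow> int \<Rightarrow> complex" where
  "zeta_comb a b c d = of_int a + of_int b * zeta12 + of_int c * zeta12^2 + of_int d * zeta12^3"

lemma zeta_comb_in_Zzeta12: "zeta_comb a b c d \<in> Zzeta12"
  unfolding zeta_comb_def by (intro Zzeta12.intros Zzeta12_of_int Zzeta12_power)

lemma zeta_comb_add:
  "zeta_comb a b c d + zeta_comb a' b' c' d' = zeta_comb (a + a') (b + b') (c + c') (d + d')"
  by (simp add: zeta_comb_def algebra_simps)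

lemma zeta_comb_diff:
  "zeta_comb a b c d - zeta_comb a' b' c' d' = zeta_comb (a - a') (b - b') (c - c') (d - d')"
  by (simp add: zeta_comb_def algebra_simps)

lemma zeta_comb_uminus: "- zeta_comb a b c d = zeta_comb (- a) (- b) (- c) (- d)"
  by (simp add: zeta_comb_def algebra_simps)

lemma zeta_comb_mult:
  "zeta_comb a b c d * zeta_comb e f g h =
     zeta_comb (a*e - b*h - c*g - d*f - d*h) (a*f + b*e - c*h - d*g)
       (a*g + b*f + c*e + b*h + c*g + d*f) (a*h + b*g + c*f + d*e + c*h + d*g)"
proof -
  have "zeta_comb a b c d * zeta_comb e f g h -
      zeta_comb (a*e - b*h - c*g - d*f - d*h) (a*f + b*e - c*h - d*g)
        (a*g + b*f + c*e + b*h + c*g + d*f) (a*h + b*g + c*f + d*e + c*h + d*g) =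
      (zeta12^4 - zeta12^2 + 1) *
        (of_int (d*h) * zeta12^2 + of_int (c*h + d*g) * zeta12 + of_int (b*h + c*g + d*f + d*h))"
    unfolding zeta_comb_def
    by (simp add: algebra_simps power2_eq_square power3_eq_cube power4_eq_xxxx)
  then show ?thesis
    by (simp add: zeta12_pow_4)
qed

lemma Zzeta12_imp_zeta_comb: "x \<in> Zzeta12 \<Longrightarrow> \<exists>a b c d. x = zeta_comb a b c d"
proof (induction rule: Zzeta12.induct)
  case one
  have "1 = zeta_comb 1 0 0 0" by (simp add: zeta_comb_def)
  then show ?case by blast
next
  case gen
  have "zeta12 = zeta_comb 0 1 0 0" by (simp add: zeta_comb_def)
  then show ?case by blast
next
  case add
  then show ?case by (metis zeta_comb_add)
next
  case neg
  then show ?case by (metis zeta_comb_uminus)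
next
  case mult
  then show ?case by (metis zeta_comb_mult)
qed

lemma Re_zeta_comb: "Re (zeta_comb a b c d) = (of_int (2*a + c) + of_int b * sqrt 3) / 2"
  unfolding zeta_comb_def zeta12_cube by (simp add: zeta12_eq power2_eq_square field_simps)

lemma Im_zeta_comb: "Im (zeta_comb a b c d) = (of_int (b + 2*d) + of_int c * sqrt 3) / 2"
  unfolding zeta_comb_def zeta12_cube by (simp add: zeta12_eq power2_eq_square field_simps)

lemma zeta_comb_eq_0_iff: "zeta_comb a b c d = 0 \<longleftrightarrow> a = 0 \<and> b = 0 \<and> c = 0 \<and> d = 0"
proof
  assume "zeta_comb a b c d = 0"
  then have "Re (zeta_comb a b c d) = 0" "Im (zeta_comb a b c d) = 0"
    by simp_all
  then show "a = 0 \<and> b = 0 \<and> c = 0 \<and> d = 0"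
    using int_plus_int_sqrt3_eq_0_iff[of "2*a + c" b] int_plus_int_sqrt3_eq_0_iff[of "b + 2*d" c]
    unfolding Re_zeta_comb Im_zeta_comb by simp
qed (simp add: zeta_comb_def)

lemma zeta_comb_eq_iff:
  "zeta_comb a b c d = zeta_comb a' b' c' d' \<longleftrightarrow> a = a' \<and> b = b' \<and> c = c' \<and> d = d'"
  using zeta_comb_eq_0_iff[of "a - a'" "b - b'" "c - c'" "d - d'"]
  by (simp add: zeta_comb_diff[symmetric])

lemma zeta_comb_consts:
  "0 = zeta_comb 0 0 0 0" "1 = zeta_comb 1 0 0 0" "zeta12 = zeta_comb 0 1 0 0" "\<i> = zeta_comb 0 0 0 1"
  by (simp_all add: zeta_comb_def zeta12_cube)

lemma cnj_zeta12: "cnj zeta12 = zeta_comb 0 1 0 (-1)"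
  by (simp add: complex_eq_iff Re_zeta_comb Im_zeta_comb zeta12_eq)

lemma Zzeta12_ii: "\<i> \<in> Zzeta12"
  unfolding zeta_comb_consts by (rule zeta_comb_in_Zzeta12)

lemma delta_in_Zzeta12: "delta \<in> Zzeta12"
  unfolding delta_def by (intro Zzeta12.add Zzeta12.one Zzeta12_ii)

lemma Zzeta12_cnj: "x \<in> Zzeta12 \<Longrightarrow> cnj x \<in> Zzeta12"
  by (induction rule: Zzeta12.induct) (simp_all add: cnj_zeta12 zeta_comb_in_Zzeta12 Zzeta12.intros)

lemma of_nat_eq_zeta_comb: "of_nat n = zeta_comb (int n) 0 0 0"
  by (simp add: zeta_comb_def)

section \<open>Residues modulo 2\<close>

definition cong_mod_2 :: "complex \<Rightarrow> complex \<Rightarrow> bool" where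
  "cong_mod_2 x y \<longleftrightarrow> (\<exists>t\<in>Zzeta12. x = y + 2 * t)"

lemma cong_mod_2_refl [simp]: "cong_mod_2 x x"
  unfolding cong_mod_2_def using Zzeta12_0 by force

lemma cong_mod_2_sym: "cong_mod_2 x y \<Longrightarrow> cong_mod_2 y x"
  unfolding cong_mod_2_def by (auto intro!: bexI[of _ "- _"] Zzeta12.neg)

lemma cong_mod_2_trans: "cong_mod_2 x y \<Longrightarrow> cong_mod_2 y z \<Longrightarrow> cong_mod_2 x z"
  unfolding cong_mod_2_def by (auto intro!: bexI[of _ "_ + _"] Zzeta12.add simp: algebra_simps)

lemma cong_mod_2_add: "cong_mod_2 x x' \<Longrightarrow> cong_mod_2 y y' \<Longrightarrow> cong_mod_2 (x + y) (x' + y')"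
  unfolding cong_mod_2_def by (auto intro!: bexI[of _ "_ + _"] Zzeta12.add simp: algebra_simps)

lemma cong_mod_2_mult:
  assumes "cong_mod_2 x x'" "cong_mod_2 y y'" "x \<in> Zzeta12" "y' \<in> Zzeta12"
  shows "cong_mod_2 (x * y) (x' * y')"
proof -
  obtain s t where st: "s \<in> Zzeta12" "t \<in> Zzeta12" "x = x' + 2 * s" "y = y' + 2 * t"
    using assms(1,2) unfolding cong_mod_2_def by blast
  then have "x * y = x' * y' + 2 * (x * t + s * y')"
    by (simp add: algebra_simps)
  then show ?thesis
    unfolding cong_mod_2_def using st assms(3,4) by (blast intro: Zzeta12.add Zzeta12.mult)
qed

lemma cong_mod_2_cnj: "cong_mod_2 x y \<Longrightarrow> cong_mod_2 (cnj x) (cnj y)"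
  unfolding cong_mod_2_def by (auto intro!: bexI[of _ "cnj _"] Zzeta12_cnj)

lemma cong_mod_2_sum:
  "(\<And>i. i \<in> A \<Longrightarrow> cong_mod_2 (f i) (g i)) \<Longrightarrow> cong_mod_2 (sum f A) (sum g A)"
  by (induction A rule: infinite_finite_induct) (simp_all add: cong_mod_2_add)

lemma cong_mod_2_in_Zzeta12: "cong_mod_2 x y \<Longrightarrow> y \<in> Zzeta12 \<Longrightarrow> x \<in> Zzeta12"
  unfolding cong_mod_2_def by (auto intro!: Zzeta12.add Zzeta12.mult Zzeta12_of_int[of 2, simplified])

lemma cong_mod_2_power_two: "1 \<le> k \<Longrightarrow> cong_mod_2 (2 ^ k) 0"
  unfolding cong_mod_2_def using Zzeta12_power[OF Zzeta12_of_int[of 2]]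
  by (intro bexI[of _ "2 ^ (k - 1)"]) (simp_all add: power_Suc[symmetric])

lemma cong_mod_2_zeta_comb_iff:
  "cong_mod_2 (zeta_comb a b c d) (zeta_comb a' b' c' d') \<longleftrightarrow>
     even (a - a') \<and> even (b - b') \<and> even (c - c') \<and> even (d - d')"
proof
  assume "cong_mod_2 (zeta_comb a b c d) (zeta_comb a' b' c' d')"
  then obtain t where "t \<in> Zzeta12" "zeta_comb a b c d = zeta_comb a' b' c' d' + 2 * t"
    unfolding cong_mod_2_def by blast
  moreover obtain p q r s where "t = zeta_comb p q r s"
    using Zzeta12_imp_zeta_comb \<open>t \<in> Zzeta12\<close> by blast
  ultimately have "zeta_comb a b c d = zeta_comb (a' + 2*p) (b' + 2*q) (c' + 2*r) (d' + 2*s)"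
    by (simp add: zeta_comb_def algebra_simps)
  then show "even (a - a') \<and> even (b - b') \<and> even (c - c') \<and> even (d - d')"
    unfolding zeta_comb_eq_iff by simp
next
  assume "even (a - a') \<and> even (b - b') \<and> even (c - c') \<and> even (d - d')"
  then obtain p q r s where "a = a' + 2 * p" "b = b' + 2 * q" "c = c' + 2 * r" "d = d' + 2 * s"
    by (metis evenE add_diff_cancel_left' diff_add_cancel)
  then have "zeta_comb a b c d = zeta_comb a' b' c' d' + 2 * zeta_comb p q r s"
    by (simp add: zeta_comb_def algebra_simps)
  then show "cong_mod_2 (zeta_comb a b c d) (zeta_comb a' b' c' d')"
    unfolding cong_mod_2_def using zeta_comb_in_Zzeta12 by blast
qed

definition delta_dvd :: "complex \<Rightarrow> bool" where
  "delta_dvd x \<longleftrightarrow> (\<exists>w\<in>Zzeta12. x = delta * w)"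

lemma two_eq_delta_mult: "2 = delta * (1 - \<i>)"
  by (simp add: delta_def algebra_simps)

lemma delta_dvd_iff_cong_mod_2:
  assumes "x \<in> Zzeta12"
  shows "delta_dvd x \<longleftrightarrow> cong_mod_2 (x * (1 - \<i>)) 0"
proof
  assume "delta_dvd x"
  then show "cong_mod_2 (x * (1 - \<i>)) 0"
    unfolding delta_dvd_def cong_mod_2_def two_eq_delta_mult by (auto simp: algebra_simps)
next
  assume "cong_mod_2 (x * (1 - \<i>)) 0"
  then obtain w where "w \<in> Zzeta12" "x * (1 - \<i>) = 2 * w"
    unfolding cong_mod_2_def by auto
  moreover have "(1 - \<i>) * delta = 2"
    by (simp add: delta_def complex_eq_iff)
  ultimately have "x * 2 = 2 * (delta * w)"
    by (metis mult.assoc mult.commute)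
  then have "x = delta * w"
    by simp
  then show "delta_dvd x"
    unfolding delta_dvd_def using \<open>w \<in> Zzeta12\<close> by blast
qed

lemma delta_dvd_cong_mod_2:
  assumes "cong_mod_2 x y" "delta_dvd y"
  shows "delta_dvd x"
proof -
  obtain t w where "t \<in> Zzeta12" "w \<in> Zzeta12" "x = y + 2 * t" "y = delta * w"
    using assms unfolding cong_mod_2_def delta_dvd_def by blast
  then have "x = delta * (w + (1 - \<i>) * t)" "w + (1 - \<i>) * t \<in> Zzeta12"
    by (simp_all add: two_eq_delta_mult algebra_simps Zzeta12.intros Zzeta12_diff Zzeta12_ii)
  then show ?thesis
    unfolding delta_dvd_def by blast
qed

lemma delta_dvd_zeta_comb_iff:
  "delta_dvd (zeta_comb a b c d) \<longleftrightarrow> even (b + c) \<and> even (a + b + d)"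
proof -
  have "zeta_comb a b c d * (1 - \<i>) = zeta_comb (a + b + d) (b + c) (c - b) (d - a - c)"
    by (simp add: zeta_comb_consts zeta_comb_diff zeta_comb_mult)
  then show ?thesis
    by (simp add: delta_dvd_iff_cong_mod_2 zeta_comb_in_Zzeta12 cong_mod_2_zeta_comb_iff
        zeta_comb_consts(1)) presburger
qed

definition cong_assoc_mod_2 :: "complex \<Rightarrow> complex \<Rightarrow> bool" where
  "cong_assoc_mod_2 e x \<longleftrightarrow> (\<exists>r. cong_mod_2 x (zeta12 ^ r * e))"

lemma cong_mod_2_uminus: "x \<in> Zzeta12 \<Longrightarrow> cong_mod_2 (- x) x"
  unfolding cong_mod_2_def by (auto intro!: bexI[of _ "- x"] Zzeta12.neg)

lemma cong_assoc_mod_2_iff_less_6: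
  assumes "e \<in> Zzeta12"
  shows "cong_assoc_mod_2 e x \<longleftrightarrow> (\<exists>r<6. cong_mod_2 x (zeta12 ^ r * e))"
proof
  assume "cong_assoc_mod_2 e x"
  then obtain r where r: "cong_mod_2 x (zeta12 ^ r * e)"
    unfolding cong_assoc_mod_2_def by blast
  have "zeta12 ^ r = (zeta12 ^ 6) ^ (r div 6) * zeta12 ^ (r mod 6)"
    by (simp only: power_mult[symmetric] power_add[symmetric] mult_div_mod_eq)
  then have "zeta12 ^ r = (-1) ^ (r div 6) * zeta12 ^ (r mod 6)"
    by (simp add: zeta12_pow_6)
  moreover have "cong_mod_2 ((-1) ^ n * y) y" if "y \<in> Zzeta12" for n y
    using that cong_mod_2_uminus by (cases "even n") simp_all
  ultimately have "cong_mod_2 (zeta12 ^ r * e) (zeta12 ^ (r mod 6) * e)"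
    using assms by (simp add: mult.assoc Zzeta12.mult Zzeta12_power Zzeta12.gen)
  then show "\<exists>r<6. cong_mod_2 x (zeta12 ^ r * e)"
    using r cong_mod_2_trans[of x] by (intro exI[of _ "r mod 6"]) simp
qed (auto simp: cong_assoc_mod_2_def)

lemma cong_assoc_mod_2_cong: "cong_mod_2 x y \<Longrightarrow> cong_assoc_mod_2 e y \<Longrightarrow> cong_assoc_mod_2 e x"
  unfolding cong_assoc_mod_2_def using cong_mod_2_trans by blast

lemma Zzeta12_residue_classes:
  assumes "x \<in> Zzeta12"
  shows "delta_dvd x \<or> cong_assoc_mod_2 1 x \<or> cong_assoc_mod_2 (zeta12 - 1) x"
proof -
  obtain a b c d where x: "x = zeta_comb a b c d"
    using Zzeta12_imp_zeta_comb assms by blast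
  let ?x2 = "zeta_comb (a mod 2) (b mod 2) (c mod 2) (d mod 2)"
  \<comment> \<open>The 16 residues are decided in coordinates: four are multiples of \<open>\<delta>\<close>, and since
      \<open>\<zeta>\<^sup>6 = -1 \<equiv> 1\<close> it suffices to try \<open>\<zeta>\<^sup>r\<close> and \<open>\<zeta>\<^sup>r (\<zeta> - 1)\<close> for \<open>r < 6\<close>.\<close>
  have residues: "\<forall>a\<in>{0,1}. \<forall>b\<in>{0,1}. \<forall>c\<in>{0,1}. \<forall>d\<in>{0,1}. delta_dvd (zeta_comb a b c d) \<or>
      cong_assoc_mod_2 1 (zeta_comb a b c d) \<or> cong_assoc_mod_2 (zeta12 - 1) (zeta_comb a b c d)"
    by (simp add: delta_dvd_zeta_comb_iff cong_assoc_mod_2_iff_less_6 zeta_comb_in_Zzeta12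
        Ex_less_Suc numeral_eq_Suc zeta_comb_consts(2,3) zeta_comb_diff zeta_comb_mult
        cong_mod_2_zeta_comb_iff)
  have "a mod 2 \<in> {0,1}" "b mod 2 \<in> {0,1}" "c mod 2 \<in> {0,1}" "d mod 2 \<in> {0,1}"
    by auto
  then have "delta_dvd ?x2 \<or> cong_assoc_mod_2 1 ?x2 \<or> cong_assoc_mod_2 (zeta12 - 1) ?x2"
    by (rule residues[rule_format])
  moreover have "cong_mod_2 x ?x2"
    unfolding x cong_mod_2_zeta_comb_iff by (simp add: minus_mod_eq_mult_div)
  ultimately show ?thesis
    using delta_dvd_cong_mod_2 cong_assoc_mod_2_cong by blast
qed

lemma delta_dvd_mult: "delta_dvd x \<Longrightarrow> y \<in> Zzeta12 \<Longrightarrow> delta_dvd (y * x)"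
  unfolding delta_dvd_def by (auto intro!: bexI[of _ "y * _"] Zzeta12.mult)

lemma cnj_zeta12_pow_mult: "cnj (zeta12 ^ r) * zeta12 ^ r = 1"
  using zeta12_mult_cnj by (simp add: mult.commute flip: power_mult_distrib)

lemma cong_assoc_mod_2_not_delta_dvd:
  assumes "e \<in> Zzeta12" "\<not> delta_dvd e" "cong_assoc_mod_2 e x"
  shows "\<not> delta_dvd x"
proof
  assume "delta_dvd x"
  obtain r where "cong_mod_2 x (zeta12 ^ r * e)"
    using assms(3) unfolding cong_assoc_mod_2_def by blast
  with \<open>delta_dvd x\<close> have "delta_dvd (zeta12 ^ r * e)"
    using delta_dvd_cong_mod_2 cong_mod_2_sym by blast
  then have "delta_dvd (cnj (zeta12 ^ r) * (zeta12 ^ r * e))"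
    by (rule delta_dvd_mult) (intro Zzeta12_cnj Zzeta12_power Zzeta12.gen)
  also have "cnj (zeta12 ^ r) * (zeta12 ^ r * e) = e"
    unfolding mult.assoc[symmetric] cnj_zeta12_pow_mult by simp
  finally show False
    using assms(2) by blast
qed

lemma not_delta_dvd_1: "\<not> delta_dvd 1"
  by (simp add: zeta_comb_consts(2) delta_dvd_zeta_comb_iff)

lemma not_delta_dvd_zeta12_minus_1: "\<not> delta_dvd (zeta12 - 1)"
  by (simp add: zeta_comb_consts(2,3) zeta_comb_diff delta_dvd_zeta_comb_iff)

lemma cong_assoc_mod_2_norm:
  assumes "e \<in> Zzeta12" "cong_assoc_mod_2 e x"
  shows "cong_mod_2 (x * cnj x) (e * cnj e)"
proof -
  obtain r where r: "cong_mod_2 x (zeta12 ^ r * e)"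
    using assms(2) unfolding cong_assoc_mod_2_def by blast
  have "zeta12 ^ r * e \<in> Zzeta12"
    using assms(1) by (simp add: Zzeta12.mult Zzeta12_power Zzeta12.gen)
  then have "cong_mod_2 (x * cnj x) (zeta12 ^ r * e * cnj (zeta12 ^ r * e))"
    using r by (intro cong_mod_2_mult cong_mod_2_cnj cong_mod_2_in_Zzeta12[OF r] Zzeta12_cnj)
  also have "zeta12 ^ r * e * cnj (zeta12 ^ r * e) = e * cnj e"
    using cnj_zeta12_pow_mult[of r] by (simp add: algebra_simps)
  finally show ?thesis .
qed

lemma delta_dvd_norm:
  assumes "delta_dvd x"
  shows "cong_mod_2 (x * cnj x) 0"
proof -
  obtain w where w: "w \<in> Zzeta12" "x = delta * w"
    using assms unfolding delta_dvd_def by blast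
  have "x * cnj x = (delta * cnj delta) * (w * cnj w)"
    unfolding w(2) by (simp only: ac_simps complex_cnj_mult)
  also have "delta * cnj delta = 2"
    by (simp add: delta_def complex_eq_iff)
  finally show ?thesis
    unfolding cong_mod_2_def using w(1) by (auto intro: Zzeta12.mult Zzeta12_cnj)
qed

definition class_indices :: "nat \<Rightarrow> complex \<Rightarrow> complex vec \<Rightarrow> nat set" where
  "class_indices m e v = {i. i < m \<and> cong_assoc_mod_2 e (v $ i)}"

lemma even_card_class_indices:
  assumes "\<forall>i<m. v $ i \<in> Zzeta12" "cong_mod_2 (\<Sum>i<m. v $ i * cnj (v $ i)) 0"
  shows "even (card (class_indices m 1 v)) \<and>
    even (card (class_indices m (zeta12 - 1) v - class_indices m 1 v))"
proof -
  define A where "A = class_indices m 1 v"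
  define B where "B = class_indices m (zeta12 - 1) v - A"
  define N where "N = (zeta12 - 1) * cnj (zeta12 - 1)"
  \<comment> \<open>\<open>N = 2 - \<surd>3\<close> has coordinates \<open>(2, -2, 0, 1)\<close>, and its \<open>\<zeta>\<close>-coordinate is what
      separates the parities of \<open>card A\<close> and \<open>card B\<close>.\<close>
  have AB: "A \<subseteq> {..<m}" "B \<subseteq> {..<m}" "A \<inter> B = {}"
    unfolding A_def B_def class_indices_def by auto
  have "cong_mod_2 (v $ i * cnj (v $ i)) (of_bool (i \<in> A) + of_bool (i \<in> B) * N)" if "i < m" for i
    using Zzeta12_residue_classes[of "v $ i"] assms(1) that
      cong_assoc_mod_2_norm[of 1] cong_assoc_mod_2_norm[of "zeta12 - 1"] delta_dvd_norm
      cong_assoc_mod_2_not_delta_dvd[of 1] not_delta_dvd_1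
      cong_assoc_mod_2_not_delta_dvd[of "zeta12 - 1"] not_delta_dvd_zeta12_minus_1
    unfolding A_def B_def N_def class_indices_def
    by (auto simp: Zzeta12.intros Zzeta12_diff)
  then have "cong_mod_2 (\<Sum>i<m. v $ i * cnj (v $ i)) (\<Sum>i<m. of_bool (i \<in> A) + of_bool (i \<in> B) * N)"
    by (intro cong_mod_2_sum) simp
  also have "(\<Sum>i<m. of_bool (i \<in> A) + of_bool (i \<in> B) * N) = of_nat (card A) + of_nat (card B) * N"
    using AB by (simp add: sum.distrib Int_absorb1 flip: sum_distrib_right)
  also have "\<dots> = zeta_comb (int (card A) + 2 * int (card B)) (- 2 * int (card B)) 0 (int (card B))"
    unfolding N_def of_nat_eq_zeta_comb complex_cnj_diff complex_cnj_one cnj_zeta12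
    by (simp add: zeta_comb_consts(2,3) zeta_comb_diff zeta_comb_mult zeta_comb_add zeta_comb_eq_iff)
  finally have
    "cong_mod_2 (zeta_comb (int (card A) + 2 * int (card B)) (- 2 * int (card B)) 0 (int (card B))) 0"
    using cong_mod_2_trans[OF cong_mod_2_sym assms(2)] by blast
  then show ?thesis
    unfolding A_def B_def zeta_comb_consts(1) cong_mod_2_zeta_comb_iff by simp
qed

section \<open>Level operators\<close>

lemma mult_mat_vec_nth_sparse_row:
  assumes "A \<in> carrier_mat m n" "v \<in> carrier_vec n" "i < m" "K \<subseteq> {..<n}"
    and "\<And>k. k < n \<Longrightarrow> k \<notin> K \<Longrightarrow> A $$ (i, k) = 0"
  shows "(A *\<^sub>v v) $ i = (\<Sum>k\<in>K. A $$ (i, k) * v $ k)"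
proof -
  have "(A *\<^sub>v v) $ i = (\<Sum>k\<in>{0..<n}. A $$ (i, k) * v $ k)"
    using assms(1-3) by (simp add: scalar_prod_def)
  also have "\<dots> = (\<Sum>k\<in>K. A $$ (i, k) * v $ k)"
    using assms(4,5) by (intro sum.mono_neutral_right) auto
  finally show ?thesis .
qed

lemma one_level_mult_vec:
  assumes "v \<in> carrier_vec m"
  shows "one_level m c j *\<^sub>v v = vec m (\<lambda>i. if i = j then c * v $ i else v $ i)"
proof (rule eq_vecI)
  fix i
  assume "i < dim_vec (vec m (\<lambda>i. if i = j then c * v $ i else v $ i))"
  then have "i < m" by simp
  then have "(one_level m c j *\<^sub>v v) $ i = one_level m c j $$ (i, i) * v $ i"
    using assms by (subst mult_mat_vec_nth_sparse_row[where K = "{i}"]) (auto simp: one_level_def)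
  then show "(one_level m c j *\<^sub>v v) $ i = vec m (\<lambda>i. if i = j then c * v $ i else v $ i) $ i"
    using \<open>i < m\<close> by (simp add: one_level_def)
qed (simp add: one_level_def)

lemma two_level_mult_vec:
  assumes "v \<in> carrier_vec m" "j < m" "j' < m" "j \<noteq> j'"
  shows "two_level m M j j' *\<^sub>v v = vec m (\<lambda>i.
    if i = j then M $$ (0, 0) * v $ j + M $$ (0, 1) * v $ j'
    else if i = j' then M $$ (1, 0) * v $ j + M $$ (1, 1) * v $ j'
    else v $ i)" (is "_ = vec m ?w")
proof (rule eq_vecI)
  fix i
  assume "i < dim_vec (vec m ?w)"
  then have i: "i < m" by simp
  have G: "two_level m M j j' \<in> carrier_mat m m"
    by (simp add: two_level_def)
  show "(two_level m M j j' *\<^sub>v v) $ i = vec m ?w $ i"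
  proof (cases "i = j \<or> i = j'")
    case True
    then have "(two_level m M j j' *\<^sub>v v) $ i = (\<Sum>k\<in>{j, j'}. two_level m M j j' $$ (i, k) * v $ k)"
      using assms i G by (intro mult_mat_vec_nth_sparse_row) (auto simp: two_level_def)
    then show ?thesis
      using assms i True by (auto simp: two_level_def)
  next
    case False
    then have "(two_level m M j j' *\<^sub>v v) $ i = (\<Sum>k\<in>{i}. two_level m M j j' $$ (i, k) * v $ k)"
      using assms i G by (intro mult_mat_vec_nth_sparse_row) (auto simp: two_level_def)
    then show ?thesis
      using i False by (simp add: two_level_def)
  qed
qed (simp add: two_level_def)

lemma allowed_op_carrier: "allowed_op m G \<Longrightarrow> G \<in> carrier_mat m m"
  unfolding allowed_op_def one_level_def two_level_def by auto

lemma foldr_mult_carrier: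
  fixes Gs :: "'a::semiring_1 mat list"
  shows "\<forall>G\<in>set Gs. G \<in> carrier_mat m m \<Longrightarrow> foldr (*) Gs (1\<^sub>m m) \<in> carrier_mat m m"
  by (induction Gs) auto

lemma foldr_mult_append:
  fixes Gs :: "'a::semiring_1 mat list"
  assumes "\<forall>G\<in>set (Gs @ Hs). G \<in> carrier_mat m m"
  shows "foldr (*) (Gs @ Hs) (1\<^sub>m m) = foldr (*) Gs (1\<^sub>m m) * foldr (*) Hs (1\<^sub>m m)"
  using assms
proof (induction Gs)
  case Nil
  then show ?case
    using left_mult_one_mat[OF foldr_mult_carrier[of Hs m]] by simp
next
  case (Cons G Gs)
  then have "G \<in> carrier_mat m m" "foldr (*) Gs (1\<^sub>m m) \<in> carrier_mat m m"
    "foldr (*) Hs (1\<^sub>m m) \<in> carrier_mat m m"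
    by (auto intro: foldr_mult_carrier)
  with Cons show ?case
    by simp
qed

definition reachable :: "nat \<Rightarrow> complex vec \<Rightarrow> complex vec \<Rightarrow> bool" where
  "reachable m v w \<longleftrightarrow>
     (\<exists>Gs. (\<forall>G\<in>set Gs. allowed_op m G) \<and> w = foldr (*) Gs (1\<^sub>m m) *\<^sub>v v)"

lemma reachable_refl: "v \<in> carrier_vec m \<Longrightarrow> reachable m v v"
  unfolding reachable_def by (intro exI[of _ "[]"]) simp

lemma reachable_trans:
  assumes "reachable m u v" "reachable m v w" "u \<in> carrier_vec m"
  shows "reachable m u w"
proof -
  obtain Gs Hs where Gs: "\<forall>G\<in>set Gs. allowed_op m G" "v = foldr (*) Gs (1\<^sub>m m) *\<^sub>v u"
    and Hs: "\<forall>G\<in>set Hs. allowed_op m G" "w = foldr (*) Hs (1\<^sub>m m) *\<^sub>v v"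
    using assms(1,2) unfolding reachable_def by blast
  have HG: "\<forall>G\<in>set (Hs @ Gs). G \<in> carrier_mat m m"
    using Gs(1) Hs(1) allowed_op_carrier by auto
  then have "foldr (*) (Hs @ Gs) (1\<^sub>m m) *\<^sub>v u = w"
    unfolding foldr_mult_append[OF HG] Gs(2) Hs(2)
    using assoc_mult_mat_vec[OF foldr_mult_carrier foldr_mult_carrier assms(3), of Hs Gs] HG by simp
  then show ?thesis
    unfolding reachable_def using Gs(1) Hs(1) by (metis Un_iff set_append)
qed

lemma reachable_allowed_op:
  "allowed_op m G \<Longrightarrow> v \<in> carrier_vec m \<Longrightarrow> reachable m v (G *\<^sub>v v)"
  unfolding reachable_def using allowed_op_carrier[of m G]
  by (intro exI[of _ "[G]"]) (simp add: right_mult_one_mat)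

lemma reachable_carrier: "reachable m v w \<Longrightarrow> v \<in> carrier_vec m \<Longrightarrow> w \<in> carrier_vec m"
  unfolding reachable_def using allowed_op_carrier foldr_mult_carrier by (metis mult_mat_vec_carrier)

lemma reachable_one_level_zeta12_power:
  assumes "v \<in> carrier_vec m" "j < m"
  shows "reachable m v (vec m (\<lambda>i. if i = j then zeta12 ^ s * v $ i else v $ i))"
proof (induction s)
  case 0
  have "vec m (\<lambda>i. if i = j then zeta12 ^ 0 * v $ i else v $ i) = v"
    using assms(1) by (intro eq_vecI) auto
  then show ?case
    using assms(1) reachable_refl by simp
next
  case (Suc s)
  let ?vs = "vec m (\<lambda>i. if i = j then zeta12 ^ s * v $ i else v $ i)"
  have "allowed_op m (one_level m zeta12 j)"
    unfolding allowed_op_def using assms(2) by blast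
  then have "reachable m ?vs (one_level m zeta12 j *\<^sub>v ?vs)"
    by (intro reachable_allowed_op vec_carrier)
  also have "one_level m zeta12 j *\<^sub>v ?vs = vec m (\<lambda>i. if i = j then zeta12 ^ Suc s * v $ i else v $ i)"
    by (subst one_level_mult_vec) auto
  finally show ?case
    using reachable_trans[OF Suc] assms(1) by blast
qed

section \<open>Making all entries divisible by \<open>\<delta>\<close>\<close>

lemma Hprime_entries:
  "Hprime $$ (0, 0) = delta / 2" "Hprime $$ (0, 1) = delta / 2"
  "Hprime $$ (1, 0) = delta / 2" "Hprime $$ (1, 1) = - delta / 2"
  unfolding Hprime_def delta_def mat_of_rows_list_def by (auto simp: complex_eq_iff)

lemma two_level_Hprime_delta_dvd:
  assumes "v \<in> carrier_vec m" "j < j'" "j' < m" "cong_mod_2 (v $ j) (v $ j')" "v $ j' \<in> Zzeta12"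
  shows "delta_dvd ((two_level m Hprime j j' *\<^sub>v v) $ j)"
    and "delta_dvd ((two_level m Hprime j j' *\<^sub>v v) $ j')"
proof -
  obtain t where t: "t \<in> Zzeta12" "v $ j = v $ j' + 2 * t"
    using assms(4) unfolding cong_mod_2_def by blast
  have "j < m" "j \<noteq> j'"
    using assms(2,3) by auto
  then have "(two_level m Hprime j j' *\<^sub>v v) $ j = delta * (v $ j' + t)"
    "(two_level m Hprime j j' *\<^sub>v v) $ j' = delta * t"
    using assms(3)
    unfolding two_level_mult_vec[OF assms(1) \<open>j < m\<close> assms(3) \<open>j \<noteq> j'\<close>] Hprime_entries
    by (simp_all add: t(2) field_simps)
  then show "delta_dvd ((two_level m Hprime j j' *\<^sub>v v) $ j)"
    "delta_dvd ((two_level m Hprime j j' *\<^sub>v v) $ j')"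
    unfolding delta_dvd_def using t(1) assms(5) by (auto intro: Zzeta12.add)
qed

lemma cong_assoc_mod_2_in_Zzeta12:
  assumes "e \<in> Zzeta12" "cong_assoc_mod_2 e x"
  shows "x \<in> Zzeta12"
proof -
  obtain r where "cong_mod_2 x (zeta12 ^ r * e)"
    using assms(2) unfolding cong_assoc_mod_2_def by blast
  moreover have "zeta12 ^ r * e \<in> Zzeta12"
    using assms(1) by (intro Zzeta12.mult Zzeta12_power Zzeta12.gen)
  ultimately show ?thesis
    by (rule cong_mod_2_in_Zzeta12)
qed

lemma cong_assoc_mod_2_rotate:
  assumes "e \<in> Zzeta12" "cong_assoc_mod_2 e x" "cong_assoc_mod_2 e y"
  shows "\<exists>s. cong_mod_2 x (zeta12 ^ s * y)"
proof -
  obtain r r' where r: "cong_mod_2 x (zeta12 ^ r * e)" and r': "cong_mod_2 y (zeta12 ^ r' * e)"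
    using assms(2,3) unfolding cong_assoc_mod_2_def by blast
  have "cong_mod_2 (zeta12 ^ (11 * r' + r) * y) (zeta12 ^ (11 * r' + r) * (zeta12 ^ r' * e))"
    using r' assms(1) by (intro cong_mod_2_mult) (auto intro: Zzeta12.mult Zzeta12_power Zzeta12.gen)
  also have "zeta12 ^ (11 * r' + r) * (zeta12 ^ r' * e) = (zeta12 ^ 12) ^ r' * (zeta12 ^ r * e)"
    by (simp add: algebra_simps flip: power_add power_mult)
  finally have "cong_mod_2 (zeta12 ^ (11 * r' + r) * y) (zeta12 ^ r * e)"
    by (simp add: zeta12_pow_12)
  then show ?thesis
    using cong_mod_2_trans[OF r cong_mod_2_sym] by blast
qed

lemma reachable_pair_delta_dvd:
  assumes v: "v \<in> carrier_vec m" and jj': "j < j'" "j' < m" and "e \<in> Zzeta12"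
    and "cong_assoc_mod_2 e (v $ j)" "cong_assoc_mod_2 e (v $ j')"
  shows "\<exists>w. reachable m v w \<and> delta_dvd (w $ j) \<and> delta_dvd (w $ j') \<and>
    (\<forall>i<m. i \<noteq> j \<longrightarrow> i \<noteq> j' \<longrightarrow> w $ i = v $ i)"
proof -
  obtain s where s: "cong_mod_2 (v $ j) (zeta12 ^ s * v $ j')"
    using cong_assoc_mod_2_rotate assms(4-6) by blast
  define v1 where "v1 = vec m (\<lambda>i. if i = j' then zeta12 ^ s * v $ i else v $ i)"
  define w where "w = two_level m Hprime j j' *\<^sub>v v1"
  have v1: "v1 \<in> carrier_vec m" "cong_mod_2 (v1 $ j) (v1 $ j')" "v1 $ j' \<in> Zzeta12"
    unfolding v1_def using s jj' cong_assoc_mod_2_in_Zzeta12[OF assms(4,6)]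
    by (auto intro: Zzeta12.mult Zzeta12_power Zzeta12.gen)
  have "reachable m v v1"
    unfolding v1_def using v jj'(2) by (rule reachable_one_level_zeta12_power)
  moreover have "allowed_op m (two_level m Hprime j j')"
    unfolding allowed_op_def using jj' by blast
  ultimately have "reachable m v w"
    unfolding w_def using reachable_trans reachable_allowed_op[OF _ v1(1)] v by blast
  moreover have "delta_dvd (w $ j)" "delta_dvd (w $ j')"
    unfolding w_def using two_level_Hprime_delta_dvd[OF v1(1) jj' v1(2,3)] by auto
  moreover have "\<forall>i<m. i \<noteq> j \<longrightarrow> i \<noteq> j' \<longrightarrow> w $ i = v $ i"
    unfolding w_def v1_def using jj' by (simp add: two_level_mult_vec)
  ultimately show ?thesis
    by blast
qed

lemma obtain_less_pair:
  fixes S :: "'a::linorder set"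
  assumes "finite S" "2 \<le> card S"
  obtains j j' where "j \<in> S" "j' \<in> S" "j < j'"
proof -
  obtain a b where "a \<in> S" "b \<in> S" "a \<noteq> b"
    using assms card_le_Suc0_iff_eq[OF assms(1)] by fastforce
  then show ?thesis
    using that by (metis linorder_neqE)
qed

lemma reachable_even_set_delta_dvd:
  assumes "even (card S)" "v \<in> carrier_vec m" "S \<subseteq> {..<m}" "e \<in> Zzeta12"
    and "\<forall>i\<in>S. cong_assoc_mod_2 e (v $ i)"
  shows "\<exists>w. reachable m v w \<and> (\<forall>i\<in>S. delta_dvd (w $ i)) \<and> (\<forall>i<m. i \<notin> S \<longrightarrow> w $ i = v $ i)"
proof -
  obtain n where "card S = 2 * n"
    using assms(1) by blast
  from this assms(2-) show ?thesis
  proof (induction n arbitrary: S v)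
    case 0
    then have "S = {}"
      using finite_subset[OF _ finite_lessThan] by auto
    then show ?case
      using reachable_refl[OF \<open>v \<in> carrier_vec m\<close>] by blast
  next
    case (Suc n)
    have "finite S"
      using Suc.prems(3) finite_subset by blast
    then obtain j j' where jj': "j \<in> S" "j' \<in> S" "j < j'"
      using obtain_less_pair Suc.prems(1) by (metis le_add1 mult_Suc_right)
    then have "j < m" "j' < m"
      using Suc.prems(3) by auto
    then obtain v1 where v1: "reachable m v v1" "delta_dvd (v1 $ j)" "delta_dvd (v1 $ j')"
      "\<forall>i<m. i \<noteq> j \<longrightarrow> i \<noteq> j' \<longrightarrow> v1 $ i = v $ i"
      using reachable_pair_delta_dvd[OF Suc.prems(2) \<open>j < j'\<close> \<open>j' < m\<close> Suc.prems(4)] jj' Suc.prems(5)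
      by blast
    let ?S = "S - {j, j'}"
    have "card ?S = 2 * n"
      using Suc.prems(1) jj' \<open>finite S\<close> by (simp add: card_Diff_subset)
    moreover have "\<forall>i\<in>?S. cong_assoc_mod_2 e (v1 $ i)"
      using v1(4) Suc.prems(3,5) by auto
    ultimately obtain w where w: "reachable m v1 w" "\<forall>i\<in>?S. delta_dvd (w $ i)"
      "\<forall>i<m. i \<notin> ?S \<longrightarrow> w $ i = v1 $ i"
      using Suc.IH[of ?S v1] reachable_carrier[OF v1(1) Suc.prems(2)] Suc.prems(3,4) by blast
    have "reachable m v w"
      using reachable_trans[OF v1(1) w(1) Suc.prems(2)] .
    moreover have "delta_dvd (w $ i)" if "i \<in> S" for i
    proof (cases "i = j \<or> i = j'")
      case True
      then show ?thesis
        using w(3) v1(2,3) \<open>j < m\<close> \<open>j' < m\<close> by auto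
    next
      case False
      then show ?thesis
        using w(2) that by blast
    qed
    moreover have "\<forall>i<m. i \<notin> S \<longrightarrow> w $ i = v $ i"
      using w(3) v1(4) jj' by auto
    ultimately show ?case
      by blast
  qed

  qed

lemma reachable_all_delta_dvd:
  assumes v: "v \<in> carrier_vec m" and vZ: "\<forall>i<m. v $ i \<in> Zzeta12"
    and "cong_mod_2 (\<Sum>i<m. v $ i * cnj (v $ i)) 0"
  shows "\<exists>w. reachable m v w \<and> (\<forall>i<m. delta_dvd (w $ i))"
proof -
  define A where "A = class_indices m 1 v"
  define B where "B = class_indices m (zeta12 - 1) v - A"
  have AB: "A \<subseteq> {..<m}" "B \<subseteq> {..<m}" "A \<inter> B = {}"
    unfolding A_def B_def class_indices_def by auto
  have even: "even (card A)" "even (card B)"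
    using even_card_class_indices[OF vZ assms(3)] unfolding A_def B_def by auto
  obtain v1 where v1: "reachable m v v1" "\<forall>i\<in>A. delta_dvd (v1 $ i)" "\<forall>i<m. i \<notin> A \<longrightarrow> v1 $ i = v $ i"
    using reachable_even_set_delta_dvd[OF even(1) v AB(1) Zzeta12.one] unfolding A_def class_indices_def
    by auto
  have "\<forall>i\<in>B. cong_assoc_mod_2 (zeta12 - 1) (v1 $ i)"
    using v1(3) unfolding B_def class_indices_def by auto
  then obtain w where w: "reachable m v1 w" "\<forall>i\<in>B. delta_dvd (w $ i)" "\<forall>i<m. i \<notin> B \<longrightarrow> w $ i = v1 $ i"
    using reachable_even_set_delta_dvd[OF even(2) reachable_carrier[OF v1(1) v] AB(2)
        Zzeta12_diff[OF Zzeta12.gen Zzeta12.one]]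
    by blast
  have "delta_dvd (w $ i)" if "i < m" for i
  proof -
    consider "i \<in> A" | "i \<in> B" | "i \<notin> A" "i \<notin> B"
      by blast
    then show ?thesis
    proof cases
      case 1
      then show ?thesis using v1(2) w(3) AB(3) that by auto
    next
      case 2
      then show ?thesis using w(2) by blast
    next
      case 3
      then have "\<not> cong_assoc_mod_2 1 (v $ i)" "\<not> cong_assoc_mod_2 (zeta12 - 1) (v $ i)"
        using that unfolding A_def B_def class_indices_def by auto
      then show ?thesis
        using Zzeta12_residue_classes[of "v $ i"] vZ v1(3) w(3) that 3 by auto
    qed
  qed
  then show ?thesis
    using reachable_trans[OF v1(1) w(1) v] by blast
qed

section \<open>Least denominator exponents\<close>

lemma R12_delta_power: "x \<in> R12 \<Longrightarrow> \<exists>l. delta ^ l * x \<in> Zzeta12"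
proof (induction rule: R12.induct)
  case one
  then show ?case
    using Zzeta12.one by (intro exI[of _ 0]) simp
next
  case half
  have "delta ^ 2 * (1 / 2) = \<i>"
    by (simp add: delta_def power2_eq_square complex_eq_iff)
  then show ?case
    using Zzeta12_ii by (intro exI[of _ 2]) simp
next
  case gen
  then show ?case
    using Zzeta12.gen by (intro exI[of _ 0]) simp
next
  case (add x y)
  then obtain k l where "delta ^ k * x \<in> Zzeta12" "delta ^ l * y \<in> Zzeta12"
    by blast
  moreover have "delta ^ (k + l) * (x + y) = delta ^ l * (delta ^ k * x) + delta ^ k * (delta ^ l * y)"
    by (simp add: power_add algebra_simps)
  ultimately show ?case
    using delta_in_Zzeta12 by (metis Zzeta12.add Zzeta12.mult Zzeta12_power)
next
  case (neg x)
  then show ?case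
    using Zzeta12.neg by (metis mult_minus_right)
next
  case (mult x y)
  then obtain k l where "delta ^ k * x \<in> Zzeta12" "delta ^ l * y \<in> Zzeta12"
    by blast
  moreover have "delta ^ (k + l) * (x * y) = (delta ^ k * x) * (delta ^ l * y)"
    by (simp add: power_add algebra_simps)
  ultimately show ?case
    by (metis Zzeta12.mult)
qed

lemma delta_power_mult_mono:
  assumes "delta ^ l * x \<in> Zzeta12" "l \<le> L"
  shows "delta ^ L * x \<in> Zzeta12"
proof -
  have "delta ^ L = delta ^ (L - l) * delta ^ l"
    using assms(2) by (simp flip: power_add)
  then have "delta ^ L * x = delta ^ (L - l) * (delta ^ l * x)"
    by (simp add: mult.assoc)
  also have "\<dots> \<in> Zzeta12"
    by (rule Zzeta12.mult[OF Zzeta12_power[OF delta_in_Zzeta12] assms(1)])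
  finally show ?thesis .
qed

lemma lde_in_Zzeta12:
  assumes "\<forall>i<dim_vec u. u $ i \<in> R12"
  shows "\<forall>i<dim_vec u. delta ^ lde u * u $ i \<in> Zzeta12"
proof -
  have "\<forall>i<dim_vec u. \<exists>l. delta ^ l * u $ i \<in> Zzeta12"
    using R12_delta_power assms by blast
  then obtain l where l: "\<forall>i<dim_vec u. delta ^ l i * u $ i \<in> Zzeta12"
    by metis
  have "\<forall>i<dim_vec u. delta ^ (\<Sum>i<dim_vec u. l i) * u $ i \<in> Zzeta12"
    using l by (auto intro: delta_power_mult_mono member_le_sum)
  then show ?thesis
    unfolding lde_def by (rule LeastI)
qed

lemma lde_mult_vec_less:
  assumes F: "F \<in> carrier_mat m m" and u: "u \<in> carrier_vec m" and "1 \<le> k"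
    and "\<forall>i<m. delta_dvd ((F *\<^sub>v (delta ^ k \<cdot>\<^sub>v u)) $ i)"
  shows "lde (F *\<^sub>v u) < k"
proof -
  have "delta ^ (k - 1) * (F *\<^sub>v u) $ i \<in> Zzeta12" if i: "i < m" for i
  proof -
    obtain w where "w \<in> Zzeta12" "(F *\<^sub>v (delta ^ k \<cdot>\<^sub>v u)) $ i = delta * w"
      using assms(4) i unfolding delta_dvd_def by blast
    moreover have "(F *\<^sub>v (delta ^ k \<cdot>\<^sub>v u)) $ i = delta * (delta ^ (k - 1) * (F *\<^sub>v u) $ i)"
      using F u i \<open>1 \<le> k\<close> by (simp add: mult_mat_vec power_eq_if)
    moreover have "delta \<noteq> 0"
      by (simp add: delta_def complex_eq_iff)
    ultimately show ?thesis
      by simp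
  qed
  then have "lde (F *\<^sub>v u) \<le> k - 1"
    unfolding lde_def using F by (intro Least_le) simp
  then show ?thesis
    using \<open>1 \<le> k\<close> by simp
qed

lemma scaled_unit_vector_norm:
  assumes "is_unit_vector u"
  shows "(\<Sum>i<dim_vec u. (delta ^ k * u $ i) * cnj (delta ^ k * u $ i)) = 2 ^ k"
proof -
  have "(delta ^ k * x) * cnj (delta ^ k * x) = 2 ^ k * complex_of_real ((cmod x)\<^sup>2)" for x
  proof -
    have "delta * cnj delta = 2"
      by (simp add: delta_def complex_eq_iff)
    have "(delta ^ k * x) * cnj (delta ^ k * x) = (delta * cnj delta) ^ k * (x * cnj x)"
      by (simp add: algebra_simps)
    also have "\<dots> = 2 ^ k * complex_of_real ((cmod x)\<^sup>2)"
      unfolding complex_norm_square \<open>delta * cnj delta = 2\<close> ..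
    finally show ?thesis .
  qed
  then have "(\<Sum>i<dim_vec u. (delta ^ k * u $ i) * cnj (delta ^ k * u $ i)) =
      2 ^ k * complex_of_real (\<Sum>i<dim_vec u. (cmod (u $ i))\<^sup>2)"
    by (simp add: sum_distrib_left)
  then show ?thesis
    using assms unfolding is_unit_vector_def by simp
qed

theorem lemma7p4:
  fixes u :: "complex vec" and m :: nat
  assumes "u \<in> carrier_vec m"
    and "\<forall>i < m. u $ i \<in> R12"
    and "is_unit_vector u"
    and "lde u \<ge> 1"
  shows "\<exists>Gs :: complex mat list. (\<forall>G \<in> set Gs. allowed_op m G) \<and>
           lde (foldr (*) Gs (1\<^sub>m m) *\<^sub>v u) < lde u"
proof -
  define k where "k = lde u"
  define v where "v = delta ^ k \<cdot>\<^sub>v u"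
  have v: "v \<in> carrier_vec m" and vZ: "\<forall>i<m. v $ i \<in> Zzeta12"
    using lde_in_Zzeta12[of u] assms(1,2) unfolding v_def k_def by auto
  have "cong_mod_2 (\<Sum>i<m. v $ i * cnj (v $ i)) 0"
    using scaled_unit_vector_norm[OF assms(3), of k] cong_mod_2_power_two[of k] assms(1,4)
    unfolding v_def k_def by simp
  then obtain w where "reachable m v w" "\<forall>i<m. delta_dvd (w $ i)"
    using reachable_all_delta_dvd[OF v vZ] by blast
  then obtain Gs where Gs: "\<forall>G\<in>set Gs. allowed_op m G"
    and "\<forall>i<m. delta_dvd ((foldr (*) Gs (1\<^sub>m m) *\<^sub>v v) $ i)"
    unfolding reachable_def by blast
  moreover have "foldr (*) Gs (1\<^sub>m m) \<in> carrier_mat m m"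
    using Gs allowed_op_carrier by (blast intro: foldr_mult_carrier)
  ultimately show ?thesis
    using assms(1,4) lde_mult_vec_less unfolding v_def k_def by blast
qed

end
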